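(* Let $x$ be a random input with true label $Y$, taking labels in a finite set. Let $S^A_y(x)$ and $S^B_y(x)$ be two real-valued class-score functions, with predictions $\hat y_A(x)=\arg\max_y S^A_y(x)$ and $\hat y_B(x)=\arg\max_y S^B_y(x)$. Define $\Delta_A(x)=S^A_{\hat y_A(x)}(x)-\max_{y\neq\hat y_A(x)}S^A_y(x)$ and $E(x)=\max_y|S^A_y(x)-S^B_y(x)|$. Then for every $t\ge 0$, $$\Pr[\hat y_A(x)\ne\hat y_B(x)]\le\Pr[\Delta_A(x)\le 2t]+\Pr[E(x)>t],$$ and consequently, with $\mathrm{Acc}(A)=\Pr[\hat y_A(x)=Y]$ and $\mathrm{Acc}(B)=\Pr[\hat y_B(x)=Y]$, $$|\mathrm{Acc}(A)-\mathrm{Acc}(B)|\le\Pr[\hat y_A(x)\ne\hat y_B(x)]\le\Pr[\Delta_A(x)\le 2t]+\Pr[E(x)>t].$$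
   Context: The scores $S^A_y,S^B_y$ are cumulative class scores of two classifiers (sums of per-block goodness values); predictions are given by argmax over labels. *)

theory Defs
  imports "HOL-Probability.Probability"
begin

definition margin :: "('y::finite \<Rightarrow> 'x \<Rightarrow> real) \<Rightarrow> 'y \<Rightarrow> 'x \<Rightarrow> real" where
  "margin S yhat x = S yhat x - Max {S y x | y. y \<noteq> yhat}"

definition score_gap :: "('y::finite \<Rightarrow> 'x \<Rightarrow> real) \<Rightarrow> ('y \<Rightarrow> 'x \<Rightarrow> real) \<Rightarrow> 'x \<Rightarrow> real" where
  "score_gap SA SB x = Max (range (\<lambda>y. \<bar>SA y x - SB y x\<bar>))"

end

theory Submission
  imports Defs
begin

text \<open>If the two classifiers disagree at \<open>x\<close>, the label \<open>b\<close> predicted by \<open>B\<close> competes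
  with the label \<open>a\<close> predicted by \<open>A\<close>, so the margin of \<open>A\<close> is at most
  \<open>S\<^sup>A\<^sub>a - S\<^sup>A\<^sub>b \<le> (S\<^sup>B\<^sub>a + E) - (S\<^sup>B\<^sub>b - E) \<le> 2E\<close>. Hence disagreement forces
  \<open>\<Delta>\<^sub>A \<le> 2t\<close> or \<open>E > t\<close>, and the first bound is a union bound. The accuracy bound
  holds because the events \<open>y\<^sub>A = Y\<close> and \<open>y\<^sub>B = Y\<close> differ only where \<open>y\<^sub>A \<noteq> y\<^sub>B\<close>.\<close>

lemma margin_le_score_diff:
  assumes "y \<noteq> yhat"
  shows "margin S yhat x \<le> S yhat x - S y x"
proof -
  have "S y x \<le> Max {S y' x | y'. y' \<noteq> yhat}"
    using assms by (intro Max_ge) auto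
  then show ?thesis
    unfolding margin_def by linarith
qed

lemma abs_score_diff_le_score_gap:
  fixes SA SB :: "'y::finite \<Rightarrow> 'x \<Rightarrow> real"
  shows "\<bar>SA y x - SB y x\<bar> \<le> score_gap SA SB x"
  unfolding score_gap_def by (rule Max_ge) auto

lemma margin_le_twice_score_gap:
  assumes "a \<noteq> b" and "SB a x \<le> SB b x"
  shows "margin SA a x \<le> 2 * score_gap SA SB x"
proof -
  have "margin SA a x \<le> SA a x - SA b x"
    using assms(1) by (intro margin_le_score_diff) auto
  also have "\<dots> \<le> 2 * score_gap SA SB x"
    using abs_score_diff_le_score_gap[of SA a x SB] abs_score_diff_le_score_gap[of SA b x SB] assms(2)
    by linarith
  finally show ?thesis .
qed

lemma borel_measurable_margin:
  fixes S :: "'y::finite \<Rightarrow> 'x \<Rightarrow> real"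
  assumes "\<And>y. S y \<in> borel_measurable N" and "yhat \<in> measurable N (count_space UNIV)"
  shows "(\<lambda>x. margin S (yhat x) x) \<in> borel_measurable N"
proof -
  have fixed_label: "(\<lambda>x. margin S y x) \<in> borel_measurable N" for y
    unfolding margin_def setcompr_eq_image using assms(1)
    by (intro borel_measurable_diff borel_measurable_Max) auto
  show ?thesis
    by (rule measurable_compose_countable'[where I = UNIV, OF fixed_label]) (use assms(2) in auto)
qed

lemma borel_measurable_score_gap:
  fixes SA SB :: "'y::finite \<Rightarrow> 'x \<Rightarrow> real"
  assumes "\<And>y. SA y \<in> borel_measurable N" and "\<And>y. SB y \<in> borel_measurable N"
  shows "score_gap SA SB \<in> borel_measurable N"
  unfolding score_gap_def using assms
  by (intro borel_measurable_Max borel_measurable_abs borel_measurable_diff) auto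

lemma (in finite_measure) finite_measure_le_measure_Un:
  assumes "A \<subseteq> B \<union> C" and "B \<in> sets M" and "C \<in> sets M"
  shows "measure M A \<le> measure M B + measure M C"
proof -
  have "measure M A \<le> measure M (B \<union> C)"
    using assms by (intro finite_measure_mono) auto
  also have "\<dots> \<le> measure M B + measure M C"
    using assms(2,3) by (rule measure_Un_le)
  finally show ?thesis .
qed

lemma (in finite_measure) abs_measure_agree_diff_le_measure_disagree:
  fixes f g Y :: "'a \<Rightarrow> 'b::countable"
  assumes "f \<in> measurable M (count_space UNIV)" and "g \<in> measurable M (count_space UNIV)"
    and "Y \<in> measurable M (count_space UNIV)"
  shows "\<bar>measure M {w \<in> space M. f w = Y w} - measure M {w \<in> space M. g w = Y w}\<bar>
           \<le> measure M {w \<in> space M. f w \<noteq> g w}"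
proof -
  have sets: "{w \<in> space M. f w = Y w} \<in> sets M" "{w \<in> space M. g w = Y w} \<in> sets M"
      "{w \<in> space M. f w \<noteq> g w} \<in> sets M"
    using assms by measurable
  have "measure M {w \<in> space M. f w = Y w}
          \<le> measure M {w \<in> space M. g w = Y w} + measure M {w \<in> space M. f w \<noteq> g w}"
    using sets by (intro finite_measure_le_measure_Un) auto
  moreover have "measure M {w \<in> space M. g w = Y w}
          \<le> measure M {w \<in> space M. f w = Y w} + measure M {w \<in> space M. f w \<noteq> g w}"
    using sets by (intro finite_measure_le_measure_Un) auto
  ultimately show ?thesis
    by linarith
qed

theorem proposition2:
  fixes M :: "'w measure" and N :: "'x measure"
    and X :: "'w \<Rightarrow> 'x" and Y :: "'w \<Rightarrow> 'y::finite"
    and SA SB :: "'y \<Rightarrow> 'x \<Rightarrow> real"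
    and yA yB :: "'x \<Rightarrow> 'y"
    and t :: real
  assumes "prob_space M"
    and "CARD('y) \<ge> 2"
    and "X \<in> measurable M N"
    and "Y \<in> measurable M (count_space UNIV)"
    and "\<And>y. SA y \<in> borel_measurable N"
    and "\<And>y. SB y \<in> borel_measurable N"
    and "yA \<in> measurable N (count_space UNIV)"
    and "yB \<in> measurable N (count_space UNIV)"
    and argmaxA: "\<And>x y. SA y x \<le> SA (yA x) x"
    and argmaxB: "\<And>x y. SB y x \<le> SB (yB x) x"
    and "t \<ge> 0"
  shows "(measure M {w \<in> space M. yA (X w) \<noteq> yB (X w)}
           \<le> measure M {w \<in> space M. margin SA (yA (X w)) (X w) \<le> 2 * t}
             + measure M {w \<in> space M. score_gap SA SB (X w) > t})
         \<and> (\<bar>measure M {w \<in> space M. yA (X w) = Y w} - measure M {w \<in> space M. yB (X w) = Y w}\<bar>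
           \<le> measure M {w \<in> space M. yA (X w) \<noteq> yB (X w)})"
proof
  interpret prob_space M by fact
  let ?disagree = "{w \<in> space M. yA (X w) \<noteq> yB (X w)}"
  let ?small_margin = "{w \<in> space M. margin SA (yA (X w)) (X w) \<le> 2 * t}"
  let ?large_gap = "{w \<in> space M. score_gap SA SB (X w) > t}"
  have "?disagree \<subseteq> ?small_margin \<union> ?large_gap"
  proof
    fix w assume "w \<in> ?disagree"
    then have "w \<in> space M" and disagree: "yA (X w) \<noteq> yB (X w)"
      by auto
    moreover have "margin SA (yA (X w)) (X w) \<le> 2 * score_gap SA SB (X w)"
      using margin_le_twice_score_gap[where SB = SB, OF disagree argmaxB] .
    ultimately show "w \<in> ?small_margin \<union> ?large_gap"
      by (cases "score_gap SA SB (X w) > t") simp_all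
  qed
  moreover have "?small_margin \<in> sets M" and "?large_gap \<in> sets M"
    using measurable_compose[OF assms(3) borel_measurable_margin[OF assms(5,7)]]
      measurable_compose[OF assms(3) borel_measurable_score_gap[OF assms(5,6)]]
    by measurable
  ultimately show "measure M ?disagree \<le> measure M ?small_margin + measure M ?large_gap"
    by (intro finite_measure_le_measure_Un)
  show "\<bar>measure M {w \<in> space M. yA (X w) = Y w} - measure M {w \<in> space M. yB (X w) = Y w}\<bar>
      \<le> measure M ?disagree"
    using measurable_compose[OF assms(3,7)] measurable_compose[OF assms(3,8)] assms(4)
    by (rule abs_measure_agree_diff_le_measure_disagree)
qed

end
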